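(* For every $n\ge 2$ and every proper ideal $\Delta\subset B_n$, the Bier sphere $\mathrm{Bier}(B_n,\Delta)$ is a shellable simplicial complex (of dimension $n-2$).
   Context: $B_n$ is the Boolean lattice of all subsets of $[1,n]=\{1,\dots,n\}$. A proper ideal $\Delta\subset B_n$ is a nonempty family of subsets of $[1,n]$ closed under taking subsets with $[1,n]\notin\Delta$ (an abstract simplicial complex with $\emptyset\in\Delta$). The Bier sphere $\mathrm{Bier}(B_n,\Delta)$ is the simplicial complex whose faces are the pairs $(B,C)$ with $B\subsetneq C\subseteq[1,n]$, $B\in\Delta$, $C\notin\Delta$, with $(B',C')$ a face of $(B,C)$ iff $B'\subseteq B$ and $C\subseteq C'$; concretely $(B,C)$ is the vertex set $B\sqcup\{\bar d: d\in[1,n]\setminus C\}$ on the vertex set $[1,n]\sqcup\{\bar1,\dots,\bar n\}$ (the deleted join of $\Delta$ with its Alexander dual). The face $(B,C)$ has $|B|+n-|C|$ vertices. Its facets are the pairs $(A;x):=(A,A\cup\{x\})$ with $A\in\Delta$, $x\notin A$, $A\cup\{x\}\notin\Delta$; each has $n-1$ vertices. A pure simplicial complex is shellable if its facets can be ordered $F_1,F_2,\dots$ so that for each $k\ge2$ the intersection of $F_k$ with $F_1\cup\dots\cup F_{k-1}$ (as subcomplexes) is pure of dimension $\dim F_k-1$. *)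

theory Defs
  imports Main
begin

text \<open>Vertices: Inl i stands for i, Inr d stands for the barred vertex of d.\<close>

definition bier :: "nat \<Rightarrow> nat set set \<Rightarrow> (nat + nat) set set" where
  "bier n \<Delta> = {Inl ` B \<union> Inr ` ({1..n} - C) | B C.
       B \<subset> C \<and> C \<subseteq> {1..n} \<and> B \<in> \<Delta> \<and> C \<notin> \<Delta>}"

definition simplicial_complex :: "'a set set \<Rightarrow> bool" where
  "simplicial_complex K \<longleftrightarrow> finite K \<and> (\<forall>F\<in>K. finite F) \<and> (\<forall>F\<in>K. \<forall>G. G \<subseteq> F \<longrightarrow> G \<in> K)"

definition facets :: "'a set set \<Rightarrow> 'a set set" where
  "facets K = {F \<in> K. \<forall>G\<in>K. F \<subseteq> G \<longrightarrow> G = F}"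

text \<open>Pure with all facets having m vertices (i.e. pure of dimension m - 1).\<close>
definition pure_card :: "'a set set \<Rightarrow> nat \<Rightarrow> bool" where
  "pure_card K m \<longleftrightarrow> (\<forall>F\<in>facets K. card F = m)"

text \<open>Shelling order: for k \<ge> 2 (0-based index k \<ge> 1) the subcomplex of faces of F_k
  lying in some earlier facet is pure of dimension dim F_k - 1.\<close>
definition shellable :: "'a set set \<Rightarrow> bool" where
  "shellable K \<longleftrightarrow> (\<exists>m. pure_card K m) \<and>
     (\<exists>fs. distinct fs \<and> set fs = facets K \<and>
        (\<forall>k. 0 < k \<and> k < length fs \<longrightarrow>
           pure_card {G. G \<subseteq> fs ! k \<and> (\<exists>j<k. G \<subseteq> fs ! j)} (card (fs ! k) - 1)))"

end

theory Submission imports Defs begin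

(*
  The facet (A;x) of Bier(B_n, \<Delta>) has vertex set A together with the barred complement
  of A \<union> {x}.  List the facets by increasing rank, the number in base n + 3 whose digit at
  position m \<in> [1,n] is 1 for m = x, 2 for the elements of A above x and 0 otherwise, and
  whose least significant digit is n - |A|.  If (A';x') comes no later than (A;x), then
  either some a \<in> A above x is missing from A', or some b < x in A' \<union> {x'} is missing from
  A \<union> {x}; otherwise (A';x') would have larger rank.  Removing the vertex a, resp. the barred
  vertex b, from (A;x) leaves a face of (A - a;x) or (A - a + x;a), resp. of (A;b) or
  (A + b;x), and each of these facets has smaller rank.  Hence every facet meets the union of
  the earlier ones in a union of its codimension-one faces.
*)

section \<open>Shelling by a ranking of the facets\<close>

lemma pure_card_faces_in_earlier_facets:
  fixes fs :: "'a set list"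
  assumes "finite (fs ! k)"
    and earlier: "\<And>j. j < k \<Longrightarrow> \<exists>v \<in> fs ! k - fs ! j. \<exists>i<k. fs ! k - {v} \<subseteq> fs ! i"
  shows "pure_card {G. G \<subseteq> fs ! k \<and> (\<exists>j<k. G \<subseteq> fs ! j)} (card (fs ! k) - 1)"
  unfolding pure_card_def
proof
  let ?S = "{G. G \<subseteq> fs ! k \<and> (\<exists>j<k. G \<subseteq> fs ! j)}"
  fix T assume "T \<in> facets ?S"
  then have T: "T \<in> ?S" and T_max: "\<And>G. G \<in> ?S \<Longrightarrow> T \<subseteq> G \<Longrightarrow> G = T"
    by (auto simp: facets_def)
  then obtain j where "j < k" "T \<subseteq> fs ! j" by blast
  with earlier obtain v i where v: "v \<in> fs ! k" "v \<notin> fs ! j"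
    and i: "i < k" "fs ! k - {v} \<subseteq> fs ! i" by blast
  have "fs ! k - {v} \<in> ?S" using i by auto
  moreover have "T \<subseteq> fs ! k - {v}" using T v \<open>T \<subseteq> fs ! j\<close> by auto
  ultimately have "T = fs ! k - {v}" using T_max by blast
  then show "card T = card (fs ! k) - 1" using assms(1) v(1) by simp
qed

lemma shellable_if_rank_exchange:
  fixes K :: "'a set set" and rank :: "'a set \<Rightarrow> 'b::linorder"
  assumes "finite (facets K)" and "\<And>F. F \<in> facets K \<Longrightarrow> finite F" and "pure_card K m"
    and exchange: "\<And>F G. F \<in> facets K \<Longrightarrow> G \<in> facets K \<Longrightarrow> F \<noteq> G \<Longrightarrow> rank G \<le> rank F \<Longrightarrow>
      \<exists>v \<in> F - G. \<exists>H \<in> facets K. rank H < rank F \<and> F - {v} \<subseteq> H"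
  shows "shellable K"
proof -
  obtain L where L: "distinct L" "set L = facets K"
    using assms(1) finite_distinct_list by blast
  define fs where "fs = sort_key rank L"
  have fs: "distinct fs" "set fs = facets K" using L by (simp_all add: fs_def)
  have mono: "rank (fs ! j) \<le> rank (fs ! k)" if "j \<le> k" "k < length fs" for j k
    using sorted_nth_mono[OF sorted_sort_key[of rank L] that(1)] that by (simp add: fs_def)
  have "pure_card {G. G \<subseteq> fs ! k \<and> (\<exists>j<k. G \<subseteq> fs ! j)} (card (fs ! k) - 1)"
    if k: "k < length fs" for k
  proof (rule pure_card_faces_in_earlier_facets)
    show "finite (fs ! k)" using assms(2) fs(2) k nth_mem by blast
    fix j assume "j < k"
    then have "fs ! j \<noteq> fs ! k" "rank (fs ! j) \<le> rank (fs ! k)"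
      using fs(1) k mono by (simp_all add: nth_eq_iff_index_eq)
    moreover have "fs ! k \<in> facets K" "fs ! j \<in> facets K"
      unfolding fs(2)[symmetric] using k \<open>j < k\<close> by simp_all
    ultimately obtain v H where v: "v \<in> fs ! k - fs ! j" and H: "H \<in> facets K"
      "rank H < rank (fs ! k)" "fs ! k - {v} \<subseteq> H"
      using exchange by blast
    obtain i where i: "i < length fs" "H = fs ! i" using H(1) fs(2) by (metis in_set_conv_nth)
    have "i < k" using mono[of k i] i H(2) by (cases "i < k") auto
    then show "\<exists>v \<in> fs ! k - fs ! j. \<exists>i<k. fs ! k - {v} \<subseteq> fs ! i" using v H(3) i by blast
  qed
  then show ?thesis unfolding shellable_def using assms(3) fs by blast
qed

section \<open>Comparing numbers by their digits\<close>

lemma sum_digits_less_power: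
  fixes d :: "nat \<Rightarrow> nat"
  assumes "\<forall>m<k. d m < W"
  shows "(\<Sum>m<k. d m * W ^ m) < W ^ k"
  using assms
proof (induction k)
  case (Suc k)
  then have "(\<Sum>m<Suc k. d m * W ^ m) < (1 + d k) * W ^ k" by simp
  also have "\<dots> \<le> W * W ^ k" using Suc.prems by (intro mult_right_mono) auto
  finally show ?case by simp
qed simp

lemma sum_digits_less:
  fixes d e :: "nat \<Rightarrow> nat"
  assumes "k \<le> n" and "\<forall>m<k. d m < W" and "d k < e k"
    and "\<forall>m. k < m \<and> m \<le> n \<longrightarrow> d m \<le> e m"
  shows "(\<Sum>m\<le>n. d m * W ^ m) < (\<Sum>m\<le>n. e m * W ^ m)"
  using assms(1,4)
proof (induction n rule: dec_induct)
  case base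
  have "(\<Sum>m\<le>k. d m * W ^ m) = (\<Sum>m<k. d m * W ^ m) + d k * W ^ k"
    by (simp add: lessThan_Suc_atMost[symmetric])
  also have "\<dots> < (1 + d k) * W ^ k" using sum_digits_less_power[OF assms(2)] by simp
  also have "\<dots> \<le> e k * W ^ k" using assms(3) by (intro mult_right_mono) auto
  also have "\<dots> \<le> (\<Sum>m\<le>k. e m * W ^ m)" by (simp add: lessThan_Suc_atMost[symmetric])
  finally show ?case .
next
  case (step n)
  moreover have "d (Suc n) * W ^ Suc n \<le> e (Suc n) * W ^ Suc n"
    using step by (intro mult_right_mono) auto
  ultimately show ?case by (simp add: add_less_le_mono)
qed

section \<open>The rank of a facet of a Bier sphere\<close>

definition bier_facet :: "nat \<Rightarrow> nat set \<Rightarrow> nat \<Rightarrow> (nat + nat) set" where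
  "bier_facet n A x = Inl ` A \<union> Inr ` ({1..n} - insert x A)"

definition rank_digit :: "nat \<Rightarrow> nat set \<Rightarrow> nat \<Rightarrow> nat \<Rightarrow> nat" where
  "rank_digit n A x m =
     (if m = 0 then n - card A else if m = x then 1 else if m \<in> A \<and> x < m then 2 else 0)"

definition facet_rank :: "nat \<Rightarrow> nat set \<Rightarrow> nat \<Rightarrow> nat" where
  "facet_rank n A x = (\<Sum>m\<le>n. rank_digit n A x m * (n + 3) ^ m)"

definition facet_key :: "nat \<Rightarrow> (nat + nat) set \<Rightarrow> nat" where
  "facet_key n F = facet_rank n {a. Inl a \<in> F} (THE x. x \<in> {1..n} \<and> Inl x \<notin> F \<and> Inr x \<notin> F)"

lemma facet_key_bier_facet:
  assumes "x \<in> {1..n}" and "x \<notin> A"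
  shows "facet_key n (bier_facet n A x) = facet_rank n A x"
proof -
  have "{a. Inl a \<in> bier_facet n A x} = A" by (auto simp: bier_facet_def)
  moreover have "(THE y. y \<in> {1..n} \<and> Inl y \<notin> bier_facet n A x \<and> Inr y \<notin> bier_facet n A x) = x"
    by (rule the_equality) (use assms in \<open>auto simp: bier_facet_def\<close>)
  ultimately show ?thesis by (simp add: facet_key_def)
qed

lemma facet_rank_less:
  assumes "k \<le> n" and "rank_digit n A x k < rank_digit n A' x' k"
    and "\<forall>m. k < m \<and> m \<le> n \<longrightarrow> rank_digit n A x m \<le> rank_digit n A' x' m"
  shows "facet_rank n A x < facet_rank n A' x'"
proof -
  have "\<forall>m<k. rank_digit n A x m < n + 3" by (auto simp: rank_digit_def)
  then show ?thesis unfolding facet_rank_def using sum_digits_less assms by blast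
qed

lemma card_less_if_omits_element:
  assumes "A \<subseteq> {1..n}" and "x \<in> {1..n}" and "x \<notin> A"
  shows "card A < n"
proof -
  have "card A \<le> card ({1..n} - {x})" using assms by (intro card_mono) auto
  then show ?thesis using assms(2) by simp linarith
qed

lemma facet_rank_remove_above:
  assumes "a \<in> A" and "x < a" and "a \<le> n"
  shows "facet_rank n (A - {a}) x < facet_rank n A x"
  by (rule facet_rank_less[where k = a]) (use assms in \<open>auto simp: rank_digit_def\<close>)

lemma facet_rank_swap_above:
  assumes "a \<in> A" and "x < a" and "a \<le> n"
  shows "facet_rank n (insert x (A - {a})) a < facet_rank n A x"
  by (rule facet_rank_less[where k = a]) (use assms in \<open>auto simp: rank_digit_def\<close>)

lemma facet_rank_move_below:
  assumes "b \<notin> A" and "b < x" and "x \<le> n" and "x \<notin> A"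
  shows "facet_rank n A b < facet_rank n A x"
  by (rule facet_rank_less[where k = x]) (use assms in \<open>auto simp: rank_digit_def\<close>)

lemma facet_rank_insert_below:
  assumes "A \<subseteq> {1..n}" and "x \<in> {1..n}" and "x \<notin> A" and "b \<notin> A" and "b < x"
  shows "facet_rank n (insert b A) x < facet_rank n A x"
proof (rule facet_rank_less[where k = 0])
  have "finite A" using assms(1) finite_subset by blast
  then show "rank_digit n (insert b A) x 0 < rank_digit n A x 0"
    using card_less_if_omits_element[OF assms(1-3)] assms(4) by (simp add: rank_digit_def)
qed (use assms in \<open>auto simp: rank_digit_def\<close>)

lemma rank_digits_above_le:
  assumes "\<And>a. a \<in> A \<Longrightarrow> x < a \<Longrightarrow> a \<in> A'" and "x \<le> k" and "x' \<le> k"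
  shows "\<forall>m. k < m \<and> m \<le> n \<longrightarrow> rank_digit n A x m \<le> rank_digit n A' x' m"
  using assms by (auto simp: rank_digit_def)

lemma facet_rank_less_if_no_exchange:
  assumes A: "A \<subseteq> {1..n}" "x \<in> {1..n}" "x \<notin> A"
    and A': "A' \<subseteq> {1..n}" "x' \<in> {1..n}" "x' \<notin> A'"
    and "(A, x) \<noteq> (A', x')" and "\<not> insert x' A' \<subseteq> A"
    and above: "\<And>a. a \<in> A \<Longrightarrow> x < a \<Longrightarrow> a \<in> A'"
    and below: "\<And>b. b \<in> insert x' A' \<Longrightarrow> b < x \<Longrightarrow> b \<in> A"
  shows "facet_rank n A x < facet_rank n A' x'"
proof -
  note digits_above = rank_digits_above_le[OF above]
  \<comment> \<open>The highest differing digit sits at x', m, 0 and x in the first four cases.\<close>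
  consider "x < x'" | m where "x' \<le> x" "x < m" "m \<in> A'" "m \<notin> A"
    | "x' = x" "\<And>m. x < m \<Longrightarrow> m \<in> A' \<Longrightarrow> m \<in> A"
    | "x' < x" "x \<in> A'"
    | "x' < x" "x \<notin> A'" "\<And>m. x < m \<Longrightarrow> m \<in> A' \<Longrightarrow> m \<in> A"
    by (metis linorder_neqE_nat not_less)
  then show ?thesis
  proof cases
    case 1
    then have "x' \<notin> A" using above A' by blast
    then show ?thesis
      by (intro facet_rank_less[where k = x', OF _ _ digits_above])
        (use 1 A' in \<open>auto simp: rank_digit_def\<close>)
  next
    case (2 m)
    then show ?thesis
      by (intro facet_rank_less[where k = m, OF _ _ digits_above])
        (use A' in \<open>auto simp: rank_digit_def\<close>)
  next
    case 3
    have "A' \<subseteq> A"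
    proof
      fix y assume "y \<in> A'"
      then show "y \<in> A" using 3 A'(3) below[of y] by (metis insertI2 linorder_neqE_nat)
    qed
    moreover have "A' \<noteq> A" using 3 assms(7) by auto
    moreover have "finite A" using A(1) finite_subset by blast
    ultimately have "card A' < card A" by (meson psubset_card_mono psubsetI)
    then have "rank_digit n A x 0 < rank_digit n A' x' 0"
      using card_less_if_omits_element[OF A] by (simp add: rank_digit_def)
    then show ?thesis
      by (intro facet_rank_less[where k = 0]) (use 3 above in \<open>auto simp: rank_digit_def\<close>)
  next
    case 4
    then show ?thesis
      by (intro facet_rank_less[where k = x, OF _ _ digits_above])
        (use A in \<open>auto simp: rank_digit_def\<close>)
  next
    case 5
    have "insert x' A' \<subseteq> A"
    proof
      fix y assume "y \<in> insert x' A'"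
      then show "y \<in> A" using 5 below[of y] by (cases "y < x") (auto simp: not_less le_less)
    qed
    with assms(8) show ?thesis by blast
  qed
qed

section \<open>Facets of a Bier sphere\<close>

lemma mem_bier_iff:
  "S \<in> bier n \<Delta> \<longleftrightarrow> (\<exists>B C. S = Inl ` B \<union> Inr ` ({1..n} - C) \<and>
     B \<subset> C \<and> C \<subseteq> {1..n} \<and> B \<in> \<Delta> \<and> C \<notin> \<Delta>)"
  unfolding bier_def by blast

lemma sum_set_eq_Inl_Inr_vimage: "S = Inl ` (Inl -` S) \<union> Inr ` (Inr -` S)"
proof (intro equalityI subsetI)
  fix s assume "s \<in> S"
  then show "s \<in> Inl ` (Inl -` S) \<union> Inr ` (Inr -` S)" by (cases s) auto
qed auto

locale cube_ideal =
  fixes n :: nat and \<Delta> :: "nat set set"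
  assumes ideal_subset: "\<Delta> \<subseteq> Pow {1..n}"
    and ideal_down_closed: "A \<in> \<Delta> \<Longrightarrow> B \<subseteq> A \<Longrightarrow> B \<in> \<Delta>"
begin

lemma simplicial_complex_bier: "simplicial_complex (bier n \<Delta>)"
  unfolding simplicial_complex_def
proof (intro conjI ballI allI impI)
  have "bier n \<Delta> \<subseteq> Pow (Inl ` {1..n} \<union> Inr ` {1..n})" unfolding bier_def by auto
  then show "finite (bier n \<Delta>)" by (rule finite_subset) auto
  fix F assume "F \<in> bier n \<Delta>"
  then have "F \<subseteq> Inl ` {1..n} \<union> Inr ` {1..n}" unfolding bier_def by auto
  then show "finite F" by (rule finite_subset) auto
next
  fix F G assume "F \<in> bier n \<Delta>" and G: "G \<subseteq> F"
  then obtain B C where BC: "F = Inl ` B \<union> Inr ` ({1..n} - C)" "B \<subset> C" "C \<subseteq> {1..n}"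
    "B \<in> \<Delta>" "C \<notin> \<Delta>" unfolding mem_bier_iff by blast
  define B' where "B' = Inl -` G"
  define C' where "C' = {1..n} - Inr -` G"
  have "{1..n} - C' = Inr -` G" using G BC(1) by (auto simp: C'_def)
  then have G_eq: "G = Inl ` B' \<union> Inr ` ({1..n} - C')"
    unfolding B'_def by (simp only:) (rule sum_set_eq_Inl_Inr_vimage)
  have "B' \<subseteq> B" "C \<subseteq> C'" using G BC(1,3) by (auto simp: B'_def C'_def)
  then have "B' \<subset> C'" "B' \<in> \<Delta>" "C' \<notin> \<Delta>"
    using BC(2,4,5) ideal_down_closed by blast+
  moreover have "C' \<subseteq> {1..n}" by (simp add: C'_def)
  ultimately show "G \<in> bier n \<Delta>" unfolding mem_bier_iff using G_eq by blast
qed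

definition facet_pair :: "nat set \<Rightarrow> nat \<Rightarrow> bool" where
  "facet_pair A x \<longleftrightarrow> A \<in> \<Delta> \<and> x \<in> {1..n} \<and> x \<notin> A \<and> insert x A \<notin> \<Delta>"

lemma facet_pair_subset: "facet_pair A x \<Longrightarrow> A \<subseteq> {1..n}"
  unfolding facet_pair_def using ideal_subset by auto

lemma bier_facet_in_bier: "facet_pair A x \<Longrightarrow> bier_facet n A x \<in> bier n \<Delta>"
  unfolding mem_bier_iff bier_facet_def
  by (rule exI[of _ A], rule exI[of _ "insert x A"])
    (use facet_pair_subset[of A x] in \<open>auto simp: facet_pair_def\<close>)

lemma face_subset_bier_facet:
  assumes "S \<in> bier n \<Delta>"
  obtains A x where "facet_pair A x" and "S \<subseteq> bier_facet n A x"
proof -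
  obtain B C where BC: "S = Inl ` B \<union> Inr ` ({1..n} - C)" "B \<subset> C" "C \<subseteq> {1..n}"
    "B \<in> \<Delta>" "C \<notin> \<Delta>" using assms unfolding mem_bier_iff by blast
  define P where "P = {A. B \<subseteq> A \<and> A \<subseteq> C \<and> A \<in> \<Delta>}"
  have "finite P"
    using finite_subset[OF BC(3)] by (intro finite_subset[of P "Pow C"]) (auto simp: P_def)
  moreover have "B \<in> P" using BC by (auto simp: P_def)
  ultimately obtain A where A: "A \<in> P" and A_max: "\<And>A'. A' \<in> P \<Longrightarrow> A \<subseteq> A' \<Longrightarrow> A' = A"
    using finite_has_maximal[of P] by blast
  have "A \<noteq> C" using A BC(5) by (auto simp: P_def)
  then obtain x where x: "x \<in> C" "x \<notin> A" using A by (auto simp: P_def)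
  have "insert x A \<notin> \<Delta>" using A_max[of "insert x A"] A x by (auto simp: P_def)
  then have "facet_pair A x" using A x BC(3) by (auto simp: facet_pair_def P_def)
  moreover have "S \<subseteq> bier_facet n A x" using BC(1) A x by (auto simp: bier_facet_def P_def)
  ultimately show ?thesis using that by blast
qed

lemma bier_facet_maximal:
  assumes "facet_pair A x" and "S \<in> bier n \<Delta>" and "bier_facet n A x \<subseteq> S"
  shows "S = bier_facet n A x"
proof -
  obtain B C where BC: "S = Inl ` B \<union> Inr ` ({1..n} - C)" "B \<subset> C" "C \<subseteq> {1..n}"
    using assms(2) unfolding mem_bier_iff by blast
  have "A \<subseteq> B" using assms(3) BC(1) by (auto simp: bier_facet_def)
  moreover have "C \<subseteq> insert x A"
  proof
    fix c assume "c \<in> C"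
    then have "Inr c \<notin> bier_facet n A x" using BC(1) assms(3) by auto
    then show "c \<in> insert x A" using \<open>c \<in> C\<close> BC(3) by (auto simp: bier_facet_def)
  qed
  ultimately have "B = A" "C = insert x A" using BC(2) by blast+
  then show ?thesis using BC(1) by (simp add: bier_facet_def)
qed

lemma facets_bier: "facets (bier n \<Delta>) = {bier_facet n A x | A x. facet_pair A x}"
proof (intro equalityI subsetI)
  fix F assume F: "F \<in> facets (bier n \<Delta>)"
  then obtain A x where "facet_pair A x" "F \<subseteq> bier_facet n A x"
    using face_subset_bier_facet by (auto simp: facets_def)
  with F bier_facet_in_bier show "F \<in> {bier_facet n A x | A x. facet_pair A x}"
    unfolding facets_def by blast
next
  fix F assume "F \<in> {bier_facet n A x | A x. facet_pair A x}"
  then show "F \<in> facets (bier n \<Delta>)"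
    unfolding facets_def using bier_facet_in_bier bier_facet_maximal by blast
qed

lemma card_bier_facet:
  assumes "facet_pair A x"
  shows "card (bier_facet n A x) = n - 1"
proof -
  have A: "A \<subseteq> {1..n}" and x: "x \<in> {1..n}" "x \<notin> A"
    using assms facet_pair_subset by (auto simp: facet_pair_def)
  then have fin: "finite A" by (meson finite_atLeastAtMost finite_subset)
  have "card (bier_facet n A x) = card A + card ({1..n} - insert x A)"
    unfolding bier_facet_def
    by (subst card_Un_disjoint) (auto simp: fin card_image)
  also have "\<dots> = card A + (n - (card A + 1))"
    using A x fin by (subst card_Diff_subset) auto
  also have "\<dots> = n - 1" using card_less_if_omits_element[OF A x] by simp
  finally show ?thesis .
qed

lemma pure_card_bier: "pure_card (bier n \<Delta>) (n - 1)"
  unfolding pure_card_def facets_bier using card_bier_facet by blast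

lemma facet_key_pair: "facet_pair A x \<Longrightarrow> facet_key n (bier_facet n A x) = facet_rank n A x"
  by (simp add: facet_key_bier_facet facet_pair_def)

lemma exists_lower_facet:
  assumes "facet_pair B y" and "facet_rank n B y < r" and "S \<subseteq> bier_facet n B y"
  shows "\<exists>H \<in> facets (bier n \<Delta>). facet_key n H < r \<and> S \<subseteq> H"
proof
  show "bier_facet n B y \<in> facets (bier n \<Delta>)" using assms(1) facets_bier by blast
  show "facet_key n (bier_facet n B y) < r \<and> S \<subseteq> bier_facet n B y"
    using assms facet_key_pair by simp
qed

lemma lower_facet_without_Inl:
  assumes F: "facet_pair A x" and a: "a \<in> A" "x < a"
  shows "\<exists>H \<in> facets (bier n \<Delta>). facet_key n H < facet_rank n A x \<and> bier_facet n A x - {Inl a} \<subseteq> H"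
proof -
  have "a \<le> n" using a facet_pair_subset[OF F] by auto
  have "A - {a} \<in> \<Delta>" using F ideal_down_closed by (auto simp: facet_pair_def)
  show ?thesis
  proof (cases "insert x (A - {a}) \<in> \<Delta>")
    case False
    then have "facet_pair (A - {a}) x" using F \<open>A - {a} \<in> \<Delta>\<close> by (auto simp: facet_pair_def)
    moreover have "bier_facet n A x - {Inl a} \<subseteq> bier_facet n (A - {a}) x"
      by (auto simp: bier_facet_def)
    ultimately show ?thesis
      using exists_lower_facet facet_rank_remove_above[OF a \<open>a \<le> n\<close>] by blast
  next
    case True
    have "insert a (insert x (A - {a})) = insert x A" using a by auto
    then have "facet_pair (insert x (A - {a})) a"
      using F True a facet_pair_subset[OF F] by (auto simp: facet_pair_def)
    moreover have "bier_facet n A x - {Inl a} \<subseteq> bier_facet n (insert x (A - {a})) a"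
      using a by (auto simp: bier_facet_def)
    ultimately show ?thesis
      using exists_lower_facet facet_rank_swap_above[OF a \<open>a \<le> n\<close>] by blast
  qed
qed

lemma lower_facet_without_Inr:
  assumes F: "facet_pair A x" and b: "b \<in> {1..n}" "b \<notin> A" "b < x"
  shows "\<exists>H \<in> facets (bier n \<Delta>). facet_key n H < facet_rank n A x \<and> bier_facet n A x - {Inr b} \<subseteq> H"
proof (cases "insert b A \<in> \<Delta>")
  case False
  then have "facet_pair A b" using F b by (auto simp: facet_pair_def)
  moreover have "bier_facet n A x - {Inr b} \<subseteq> bier_facet n A b" by (auto simp: bier_facet_def)
  moreover have "facet_rank n A b < facet_rank n A x"
    using F b by (intro facet_rank_move_below) (auto simp: facet_pair_def)
  ultimately show ?thesis using exists_lower_facet by blast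
next
  case True
  have "insert x (insert b A) \<notin> \<Delta>"
  proof
    assume "insert x (insert b A) \<in> \<Delta>"
    then have "insert x A \<in> \<Delta>" by (rule ideal_down_closed) auto
    with F show False by (simp add: facet_pair_def)
  qed
  then have "facet_pair (insert b A) x" using F True b by (auto simp: facet_pair_def)
  moreover have "bier_facet n A x - {Inr b} \<subseteq> bier_facet n (insert b A) x"
    by (auto simp: bier_facet_def)
  moreover have "facet_rank n (insert b A) x < facet_rank n A x"
    using facet_rank_insert_below[OF facet_pair_subset[OF F]] F b by (simp add: facet_pair_def)
  ultimately show ?thesis using exists_lower_facet by blast
qed

lemma bier_facet_exchange:
  assumes F: "facet_pair A x" and G: "facet_pair A' x'"
    and "bier_facet n A x \<noteq> bier_facet n A' x'"
    and "facet_rank n A' x' \<le> facet_rank n A x"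
  shows "\<exists>v \<in> bier_facet n A x - bier_facet n A' x'. \<exists>H \<in> facets (bier n \<Delta>).
    facet_key n H < facet_rank n A x \<and> bier_facet n A x - {v} \<subseteq> H"
proof -
  have x: "x \<in> {1..n}" "x \<notin> A" "x' \<in> {1..n}" "x' \<notin> A'"
    using F G by (simp_all add: facet_pair_def)
  have "(A, x) \<noteq> (A', x')" using assms(3) by auto
  have "\<not> insert x' A' \<subseteq> A"
  proof
    assume "insert x' A' \<subseteq> A"
    with F show False using ideal_down_closed[of A "insert x' A'"] G by (simp add: facet_pair_def)
  qed
  have "\<not> ((\<forall>a \<in> A. x < a \<longrightarrow> a \<in> A') \<and> (\<forall>b \<in> insert x' A'. b < x \<longrightarrow> b \<in> A))"
  proof
    assume no_exchange: "(\<forall>a \<in> A. x < a \<longrightarrow> a \<in> A') \<and> (\<forall>b \<in> insert x' A'. b < x \<longrightarrow> b \<in> A)"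
    have "facet_rank n A x < facet_rank n A' x'"
      by (rule facet_rank_less_if_no_exchange[OF facet_pair_subset[OF F] x(1,2)
          facet_pair_subset[OF G] x(3,4) \<open>(A, x) \<noteq> (A', x')\<close> \<open>\<not> insert x' A' \<subseteq> A\<close>])
        (use no_exchange in blast)+
    with assms(4) show False by simp
  qed
  then consider a where "a \<in> A" "a \<notin> A'" "x < a"
    | b where "b \<in> insert x' A'" "b \<notin> A" "b < x"
    by blast
  then show ?thesis
  proof cases
    case (1 a)
    then have "Inl a \<in> bier_facet n A x - bier_facet n A' x'" by (auto simp: bier_facet_def)
    moreover obtain H where "H \<in> facets (bier n \<Delta>)" "facet_key n H < facet_rank n A x"
      "bier_facet n A x - {Inl a} \<subseteq> H"
      using lower_facet_without_Inl[OF F 1(1,3)] by blast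
    ultimately show ?thesis by blast
  next
    case (2 b)
    then have "b \<in> {1..n}" using x(3) facet_pair_subset[OF G] by blast
    with 2 have "Inr b \<in> bier_facet n A x - bier_facet n A' x'" by (auto simp: bier_facet_def)
    moreover obtain H where "H \<in> facets (bier n \<Delta>)" "facet_key n H < facet_rank n A x"
      "bier_facet n A x - {Inr b} \<subseteq> H"
      using lower_facet_without_Inr[OF F \<open>b \<in> {1..n}\<close> 2(2,3)] by blast
    ultimately show ?thesis by blast
  qed
qed

lemma shellable_bier: "shellable (bier n \<Delta>)"
proof (rule shellable_if_rank_exchange[OF _ _ pure_card_bier, where rank = "facet_key n"])
  show "finite (facets (bier n \<Delta>))" "\<And>F. F \<in> facets (bier n \<Delta>) \<Longrightarrow> finite F"
    using simplicial_complex_bier unfolding simplicial_complex_def facets_def by auto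
  fix F G assume "F \<in> facets (bier n \<Delta>)" "G \<in> facets (bier n \<Delta>)" and "F \<noteq> G"
    and "facet_key n G \<le> facet_key n F"
  moreover obtain A x A' x' where "facet_pair A x" "F = bier_facet n A x"
    and "facet_pair A' x'" "G = bier_facet n A' x'"
    using calculation(1,2) unfolding facets_bier by blast
  ultimately show "\<exists>v \<in> F - G. \<exists>H \<in> facets (bier n \<Delta>). facet_key n H < facet_key n F \<and> F - {v} \<subseteq> H"
    using bier_facet_exchange facet_key_pair by simp
qed

end

theorem theorem7:
  fixes n :: nat and \<Delta> :: "nat set set"
  assumes "n \<ge> 2"
    and "\<Delta> \<noteq> {}"
    and "\<Delta> \<subseteq> Pow {1..n}"
    and "\<forall>A\<in>\<Delta>. \<forall>B. B \<subseteq> A \<longrightarrow> B \<in> \<Delta>"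
    and "{1..n} \<notin> \<Delta>"
  shows "simplicial_complex (bier n \<Delta>) \<and> pure_card (bier n \<Delta>) (n - 1) \<and> shellable (bier n \<Delta>)"
proof -
  interpret cube_ideal n \<Delta>
    using assms(3,4) by unfold_locales blast+
  show ?thesis using simplicial_complex_bier pure_card_bier shellable_bier by blast
qed

end
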